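(* For $n\ge 1$, \begin{align*} (\mathfrak C_0+\mathfrak C_0+\mathfrak C_0+\mathfrak C_0)^n&=\frac{(2n)!}{6}\sum_{l=0}^{n}\frac{(-1)^{n-l}(2n-2l-3)!!\,(2l-1)(2l-2)(2l-3)}{2^{n-l}(n-l)!\,(2l)!}\mathfrak C_{2l}\\ &\quad+\frac{(2n)!}{6}\sum_{l=1}^{n}\frac{(-1)^{n-l}(2n-2l-3)!!\,(2l)(2l-1)(2l-3)^3}{2^{n-l}(n-l)!\,(2l)!}\mathfrak C_{2l-2}. \end{align*}
   Context: The numbers $\mathfrak C_{2n}$ (Cauchy numbers with level $2$) are defined by $\frac{t}{{\rm arcsinh}\,t}=\sum_{n=0}^\infty\mathfrak C_{2n}\frac{t^{2n}}{(2n)!}$. Convolution notation: $(\mathfrak C_{2j_1}+\cdots+\mathfrak C_{2j_k})^n:=\sum_{i_1+\cdots+i_k=n,\ i_1,\dots,i_k\ge0}\frac{(2n)!}{(2i_1)!\cdots(2i_k)!}\mathfrak C_{2i_1+2j_1}\cdots\mathfrak C_{2i_k+2j_k}$. Double factorials: $(2i-1)!!=(2i-1)(2i-3)\cdots1$ for $i\ge1$, $(-1)!!=1$, and $(-(2i+1))!!=\frac{(-1)^i}{(2i-1)!!}$ for $i\ge1$. *)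

theory Defs
  imports "HOL-Analysis.Analysis"
begin

definition t_over_arsinh :: "real \<Rightarrow> real" where
  "t_over_arsinh t = (if t = 0 then 1 else t / arsinh t)"

text \<open>Cauchy numbers with level 2: the Taylor coefficients (times m!) of t / arcsinh t at 0,
  i.e. t/arcsinh t = sum_n cauchy2 (2n) t^(2n)/(2n)!.  cauchy2 m is the paper's C_m.\<close>
definition cauchy2 :: "nat \<Rightarrow> real" where
  "cauchy2 m = ((deriv ^^ m) t_over_arsinh) 0"

text \<open>Double factorial for odd integers m: (2i-1)!! = 1*3*...*(2i-1) for i \<ge> 0 (so (-1)!! = 1),
  and (-(2i+1))!! = (-1)^i / (2i-1)!! for i \<ge> 1.\<close>
definition dfact :: "int \<Rightarrow> real" where
  "dfact m = (if m \<ge> -1 then (\<Prod>j=1..nat ((m + 1) div 2). real (2*j - 1))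
              else (let i = nat ((- m - 1) div 2) in (-1)^i / (\<Prod>j=1..i. real (2*j - 1))))"

text \<open>Convolution notation (C_{2j_1} + ... + C_{2j_k})^n, with js = [j_1,...,j_k].\<close>
definition cauchy_conv :: "nat list \<Rightarrow> nat \<Rightarrow> real" where
  "cauchy_conv js n =
     (\<Sum>is \<in> {is. length is = length js \<and> sum_list is = n}.
        fact (2*n) / (\<Prod>k<length js. fact (2 * is!k))
        * (\<Prod>k<length js. cauchy2 (2 * is!k + 2 * js!k)))"

end

theory Submission
  imports Defs "HOL-Complex_Analysis.Complex_Analysis"
begin

text \<open>
  \<open>G(t) = t / arsinh t\<close> satisfies the nonlinear differential equation
  \<open>6 G^4 + sqrt (1 + t^2) L(G) = 0\<close> with the linear operator
  \<open>L(G) = (t^3 + t^5) G''' - 3 t^2 G'' + (6 t + t^3) G' - (6 + t^2) G\<close>: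
  on a punctured disc all derivatives of \<open>G\<close> are polynomials in \<open>t\<close>, \<open>1 / arsinh t\<close>
  and \<open>1 / sqrt (1 + t^2)\<close>, and the equation becomes a polynomial identity in these.
  The coefficient of \<open>t^m\<close> in \<open>L(G)\<close> is \<open>(m - 1) (m - 2) (m - 3) c(m) + (m - 3)^3 c(m - 2)\<close>
  with \<open>c(m) = C(m) / m!\<close>. Since \<open>G\<close> is even, substituting \<open>x = t^2\<close> turns the equation into
  \<open>6 E(x)^4 = - (1 + x)^(1/2) H(x)\<close>, where \<open>H(t^2) = L(G)(t)\<close> and
  \<open>E(x) = \<Sum>\<^sub>i C(2i) x^i / (2i)!\<close> generates the convolution \<open>(C(0) + C(0) + C(0) + C(0))^n\<close>.
  The binomial coefficients \<open>(1/2 gchoose k) = - (-1)^k (2k - 3)!! / (2^k k!)\<close> produce the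
  double factorials, and comparing coefficients of \<open>x^n\<close> gives the formula.
\<close>

section \<open>Power series\<close>

definition weak_compositions :: "nat \<Rightarrow> nat \<Rightarrow> nat list set" where
  "weak_compositions k n = {is. length is = k \<and> sum_list is = n}"

lemma finite_weak_compositions: "finite (weak_compositions k n)"
proof (rule finite_subset)
  show "weak_compositions k n \<subseteq> {is. set is \<subseteq> {0..n} \<and> length is = k}"
    by (auto simp: weak_compositions_def intro: member_le_sum_list)
  show "finite {is. set is \<subseteq> {0..n} \<and> length is = k}"
    by (rule finite_lists_length_eq) simp
qed

lemma weak_compositions_0: "weak_compositions 0 n = (if n = 0 then {[]} else {})"
  by (auto simp: weak_compositions_def)

lemma weak_compositions_Suc:
  "weak_compositions (Suc k) n = (\<lambda>(i, is). i # is) ` (SIGMA i:{0..n}. weak_compositions k (n - i))"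
proof (intro set_eqI iffI)
  fix xs
  assume "xs \<in> weak_compositions (Suc k) n"
  then obtain i ys where "xs = i # ys" "length ys = k" "i + sum_list ys = n"
    by (cases xs) (auto simp: weak_compositions_def)
  then show "xs \<in> (\<lambda>(i, is). i # is) ` (SIGMA i:{0..n}. weak_compositions k (n - i))"
    by (auto simp: weak_compositions_def image_iff intro!: bexI[of _ "(i, ys)"])
qed (auto simp: weak_compositions_def)

lemma fps_nth_power_weak_compositions:
  fixes f :: "'a :: comm_semiring_1 fps"
  shows "(f ^ k) $ n = (\<Sum>is\<in>weak_compositions k n. \<Prod>j<k. f $ (is ! j))"
proof (induction k arbitrary: n)
  case 0
  then show ?case by (simp add: weak_compositions_0)
next
  case (Suc k)
  have inj: "inj_on (\<lambda>(i, is). i # is) (SIGMA i:{0..n}. weak_compositions k (n - i))"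
    by (auto simp: inj_on_def)
  have "(f ^ Suc k) $ n = (\<Sum>i=0..n. f $ i * (f ^ k) $ (n - i))"
    by (simp add: fps_mult_nth)
  also have "\<dots> = (\<Sum>i=0..n. \<Sum>is\<in>weak_compositions k (n - i). f $ i * (\<Prod>j<k. f $ (is ! j)))"
    by (simp add: Suc.IH sum_distrib_left)
  also have "\<dots> = (\<Sum>(i, is)\<in>(SIGMA i:{0..n}. weak_compositions k (n - i)).
                        \<Prod>j<Suc k. f $ ((i # is) ! j))"
    by (subst sum.Sigma)
       (auto simp: finite_weak_compositions prod.lessThan_Suc_shift simp del: prod.lessThan_Suc
             intro!: sum.cong)
  also have "\<dots> = (\<Sum>is\<in>weak_compositions (Suc k) n. \<Prod>j<Suc k. f $ (is ! j))"
    unfolding weak_compositions_Suc by (subst sum.reindex[OF inj]) (simp add: case_prod_unfold)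
  finally show ?case .
qed

lemma fps_nth_compose_X_power2:
  fixes a :: "'a :: comm_ring_1 fps"
  shows "(a oo fps_X^2) $ n = (if even n then a $ (n div 2) else 0)"
proof -
  have "(a oo fps_X^2) $ n = (\<Sum>i=0..n. if n = 2 * i then a $ i else 0)"
    by (auto simp: fps_compose_nth power_mult[symmetric] fps_X_power_nth mult.commute intro!: sum.cong)
  also have "\<dots> = (\<Sum>i\<in>{0..n} \<inter> {i. n = 2 * i}. a $ i)"
    by (simp add: sum.inter_restrict)
  also have "{0..n} \<inter> {i. n = 2 * i} = (if even n then {n div 2} else {})"
    by auto
  finally show ?thesis by simp
qed

lemma fps_compose_X_power2_eq_0_iff:
  fixes a :: "'a :: comm_ring_1 fps"
  shows "a oo fps_X^2 = 0 \<longleftrightarrow> a = 0"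
proof
  assume "a oo fps_X^2 = 0"
  then have "(a oo fps_X^2) $ (2 * n) = 0" for n
    by simp
  then show "a = 0"
    by (simp add: fps_eq_iff fps_nth_compose_X_power2)
qed simp

lemma fps_eq_even_part_compose_X_power2:
  fixes f :: "'a :: comm_ring_1 fps"
  assumes "\<And>n. odd n \<Longrightarrow> f $ n = 0"
  shows "f = Abs_fps (\<lambda>i. f $ (2 * i)) oo fps_X^2"
  by (auto simp: fps_eq_iff fps_nth_compose_X_power2 assms)

definition fps_of_real :: "real fps \<Rightarrow> 'a :: real_algebra_1 fps" where
  "fps_of_real f = Abs_fps (\<lambda>n. of_real (f $ n))"

lemma fps_nth_of_real [simp]: "fps_of_real f $ n = of_real (f $ n)"
  by (simp add: fps_of_real_def)

lemma fps_of_real_eq_iff [simp]: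
  "(fps_of_real f :: 'a :: real_algebra_1 fps) = fps_of_real g \<longleftrightarrow> f = g"
  by (simp add: fps_eq_iff)

lemma fps_of_real_0 [simp]: "fps_of_real 0 = 0"
  and fps_of_real_1 [simp]: "fps_of_real 1 = 1"
  and fps_of_real_numeral [simp]: "fps_of_real (numeral k) = numeral k"
  and fps_of_real_add [simp]: "fps_of_real (f + g) = fps_of_real f + fps_of_real g"
  and fps_of_real_mult [simp]: "fps_of_real (f * g) = fps_of_real f * fps_of_real g"
  by (simp_all add: fps_eq_iff fps_numeral_nth fps_mult_nth)

lemma fps_of_real_power [simp]: "fps_of_real (f ^ k) = fps_of_real f ^ k"
  by (induction k) simp_all

lemma fps_of_real_binomial_compose_X_power2:
  "fps_of_real (fps_binomial a oo fps_X^2) = (fps_binomial (of_real a) oo fps_X^2 :: complex fps)"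
  by (simp add: fps_eq_iff fps_nth_compose_X_power2 gbinomial_prod_rev)

section \<open>The complex arsinh near 0\<close>

definition arsinh_sqrt :: "complex \<Rightarrow> complex" where
  "arsinh_sqrt z = (z^2 + 1) powr of_real (1/2)"

text \<open>Where the principal branches of \<open>powr\<close> and \<open>Ln\<close> in \<open>arsinh_def\<close> are holomorphic.\<close>
definition arsinh_regular :: "complex \<Rightarrow> bool" where
  "arsinh_regular z \<longleftrightarrow> z^2 + 1 \<notin> \<real>\<^sub>\<le>\<^sub>0 \<and> z + arsinh_sqrt z \<notin> \<real>\<^sub>\<le>\<^sub>0"

lemma arsinh_eq_Ln: "arsinh z = Ln (z + arsinh_sqrt z)"
  by (simp add: arsinh_def arsinh_sqrt_def)

lemma arsinh_sqrt_power2: "z^2 + 1 \<noteq> 0 \<Longrightarrow> arsinh_sqrt z ^ 2 = z^2 + 1"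
  by (simp add: arsinh_sqrt_def powr_def power2_eq_square flip: exp_add)

lemma arsinh_sqrt_nonzero: "z^2 + 1 \<noteq> 0 \<Longrightarrow> arsinh_sqrt z \<noteq> 0"
  using arsinh_sqrt_power2 by force

lemma arsinh_sqrt_minus [simp]: "arsinh_sqrt (- z) = arsinh_sqrt z"
  by (simp add: arsinh_sqrt_def)

lemma has_field_derivative_arsinh_sqrt:
  assumes "z^2 + 1 \<notin> \<real>\<^sub>\<le>\<^sub>0"
  shows "(arsinh_sqrt has_field_derivative z / arsinh_sqrt z) (at z)"
proof -
  define w where "w = z^2 + 1"
  have "w \<noteq> 0" using assms by (auto simp: w_def)
  have "(arsinh_sqrt has_field_derivative of_real (1/2) * w powr (of_real (1/2) - 1) * (2 * z)) (at z)"
    unfolding arsinh_sqrt_def [abs_def] w_def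
    by (rule DERIV_chain2[where g="\<lambda>z. z^2 + 1", OF has_field_derivative_powr[OF assms]])
       (auto intro!: derivative_eq_intros)
  moreover have "w powr (of_real (1/2) - 1) * arsinh_sqrt z = 1"
    using \<open>w \<noteq> 0\<close> by (simp add: arsinh_sqrt_def w_def powr_def flip: exp_add)
  then have "w powr (of_real (1/2) - 1) = 1 / arsinh_sqrt z"
    by (metis eq_divide_eq mult_zero_right zero_neq_one)
  ultimately show ?thesis
    by (auto elim!: DERIV_cong)
qed

lemma has_field_derivative_arsinh_complex:
  assumes "arsinh_regular z"
  shows "(arsinh has_field_derivative 1 / arsinh_sqrt z) (at z)"
proof -
  from assms have reg: "z^2 + 1 \<notin> \<real>\<^sub>\<le>\<^sub>0" "z + arsinh_sqrt z \<notin> \<real>\<^sub>\<le>\<^sub>0"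
    by (auto simp: arsinh_regular_def)
  then have "z^2 + 1 \<noteq> 0" "z + arsinh_sqrt z \<noteq> 0"
    by auto
  then have "arsinh_sqrt z \<noteq> 0" "z + arsinh_sqrt z \<noteq> 0"
    using arsinh_sqrt_nonzero by blast+
  then have "inverse (z + arsinh_sqrt z) * (1 + z / arsinh_sqrt z) = 1 / arsinh_sqrt z"
    by (simp add: field_simps)
  moreover have "((\<lambda>z. Ln (z + arsinh_sqrt z)) has_field_derivative
                    inverse (z + arsinh_sqrt z) * (1 + z / arsinh_sqrt z)) (at z)"
    by (rule DERIV_chain2[where g="\<lambda>z. z + arsinh_sqrt z", OF has_field_derivative_Ln[OF reg(2)]])
       (auto intro!: derivative_eq_intros has_field_derivative_arsinh_sqrt reg(1))
  ultimately show ?thesis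
    by (simp add: arsinh_eq_Ln [abs_def])
qed

lemma isCont_eventually_in_open:
  assumes "isCont f a" "open S" "f a \<in> S"
  shows "eventually (\<lambda>z. f z \<in> S) (nhds a)"
proof -
  have "eventually (\<lambda>z. f z \<in> S) (at a)"
    using topological_tendstoD[OF assms(1)[unfolded isCont_def] assms(2,3)] .
  with assms(3) show ?thesis
    by (simp add: eventually_nhds_conv_at)
qed

lemma eventually_arsinh_regular: "eventually arsinh_regular (nhds 0)"
proof -
  have "isCont arsinh_sqrt 0"
    by (rule DERIV_isCont[OF has_field_derivative_arsinh_sqrt]) simp
  then have "eventually (\<lambda>z. z + arsinh_sqrt z \<in> - \<real>\<^sub>\<le>\<^sub>0) (nhds 0)"
    by (intro isCont_eventually_in_open continuous_intros \<open>isCont arsinh_sqrt 0\<close>)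
       (auto simp: arsinh_sqrt_def)
  moreover have "eventually (\<lambda>z::complex. z^2 + 1 \<in> - \<real>\<^sub>\<le>\<^sub>0) (nhds 0)"
    by (intro isCont_eventually_in_open) auto
  ultimately show ?thesis
    unfolding arsinh_regular_def by eventually_elim auto
qed

lemma arsinh_minus_complex:
  assumes "arsinh_regular z"
  shows "arsinh (- z) = - arsinh z"
proof -
  from assms have reg: "z^2 + 1 \<noteq> 0" "z + arsinh_sqrt z \<notin> \<real>\<^sub>\<le>\<^sub>0"
    by (auto simp: arsinh_regular_def)
  then have "z + arsinh_sqrt z \<noteq> 0"
    by auto
  moreover have "(- z + arsinh_sqrt z) * (z + arsinh_sqrt z) = 1"
    using arsinh_sqrt_power2[OF reg(1)] by (simp add: algebra_simps power2_eq_square)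
  ultimately have "- z + arsinh_sqrt z = inverse (z + arsinh_sqrt z)"
    by (simp add: field_simps)
  then show ?thesis
    by (simp add: arsinh_eq_Ln Ln_inverse[OF reg(2)])
qed

lemma arsinh_complex_of_real: "arsinh (complex_of_real x) = of_real (arsinh x)"
proof -
  have "arsinh_sqrt (of_real x) = of_real ((x^2 + 1) powr (1/2))"
    unfolding arsinh_sqrt_def by (subst powr_of_real [symmetric]) (simp_all add: add_nonneg_pos)
  then have "arsinh (complex_of_real x) = Ln (of_real (x + sqrt (x^2 + 1)))"
    by (simp add: arsinh_eq_Ln powr_half_sqrt add_nonneg_pos)
  also have "\<dots> = of_real (ln (x + sqrt (x^2 + 1)))"
    by (rule Ln_of_real[OF arsinh_real_aux])
  finally show ?thesis
    by (simp add: arsinh_real_def)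
qed

section \<open>The generating function of the Cauchy numbers of level 2\<close>

definition arsinh_quot :: "complex \<Rightarrow> complex" where
  "arsinh_quot z = (if z = 0 then 1 else arsinh z / z)"

definition z_over_arsinh :: "complex \<Rightarrow> complex" where
  "z_over_arsinh z = (if z = 0 then 1 else z / arsinh z)"

lemma arsinh_quot_analytic_at_0: "arsinh_quot analytic_on {0}"
proof -
  obtain e where "e > 0" and reg: "\<And>z. dist z 0 < e \<Longrightarrow> arsinh_regular z"
    using eventually_arsinh_regular unfolding eventually_nhds_metric by blast
  have "arsinh holomorphic_on ball 0 e"
    unfolding holomorphic_on_open[OF open_ball]
    using reg has_field_derivative_arsinh_complex by (auto simp: dist_commute) blast
  then have "(\<lambda>z. if z = 0 then deriv arsinh 0 else (arsinh z - arsinh 0) / (z - 0)) holomorphic_on ball 0 e"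
    by (rule pole_lemma_open) simp
  moreover have "deriv arsinh (0 :: complex) = 1"
    using has_field_derivative_arsinh_complex[OF reg[of 0]] \<open>e > 0\<close>
    by (auto intro!: DERIV_imp_deriv simp: arsinh_sqrt_def)
  then have "(\<lambda>z. if z = 0 then deriv arsinh 0 else (arsinh z - arsinh 0) / (z - 0)) = arsinh_quot"
    by (simp add: fun_eq_iff arsinh_quot_def)
  ultimately have "arsinh_quot holomorphic_on ball 0 e"
    by simp
  then show ?thesis
    unfolding analytic_at using \<open>e > 0\<close> by (intro exI[of _ "ball 0 e"]) auto
qed

lemma z_over_arsinh_analytic_at_0: "z_over_arsinh analytic_on {0}"
proof -
  have "z_over_arsinh = (\<lambda>z. inverse (arsinh_quot z))"
    by (simp add: fun_eq_iff z_over_arsinh_def arsinh_quot_def)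
  moreover have "(\<lambda>z. inverse (arsinh_quot z)) analytic_on {0}"
    by (intro analytic_on_inverse arsinh_quot_analytic_at_0) (simp add: arsinh_quot_def)
  ultimately show ?thesis
    by simp
qed

definition cauchy2_fps :: "complex fps" where
  "cauchy2_fps = fps_expansion z_over_arsinh 0"

lemma z_over_arsinh_has_fps_expansion: "z_over_arsinh has_fps_expansion cauchy2_fps"
  unfolding cauchy2_fps_def by (rule analytic_at_imp_has_fps_expansion_0[OF z_over_arsinh_analytic_at_0])

lemma higher_deriv_complex_of_real:
  fixes F :: "complex \<Rightarrow> complex" and f :: "real \<Rightarrow> real"
  assumes hol: "F holomorphic_on ball 0 e"
    and eq: "\<And>x. \<bar>x\<bar> < e \<Longrightarrow> F (of_real x) = of_real (f x)"
    and "\<bar>x\<bar> < e"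
  shows "(deriv ^^ m) F (of_real x) = of_real ((deriv ^^ m) f x)"
  using \<open>\<bar>x\<bar> < e\<close>
proof (induction m arbitrary: x)
  case 0
  then show ?case by (simp add: eq)
next
  case (Suc m)
  define Fm where "Fm = (deriv ^^ m) F"
  define fm where "fm = (deriv ^^ m) f"
  define D where "D = deriv Fm (of_real x)"
  have "Fm holomorphic_on ball 0 e"
    unfolding Fm_def by (rule holomorphic_higher_deriv[OF hol open_ball])
  moreover have "(of_real x :: complex) \<in> ball 0 e"
    using Suc.prems by simp
  ultimately have "(Fm has_field_derivative D) (at (of_real x))"
    unfolding D_def
    by (meson DERIV_deriv_iff_field_differentiable holomorphic_on_imp_differentiable_at open_ball)
  then have "((\<lambda>y. Fm (of_real y)) has_vector_derivative D) (at x)"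
    by (rule has_vector_derivative_real_field)
  then have D: "((\<lambda>y. complex_of_real (fm y)) has_vector_derivative D) (at x)"
    by (rule has_vector_derivative_transform_within_open[of _ _ _ "{-e<..<e}"])
       (use Suc.prems in \<open>auto simp: Fm_def fm_def Suc.IH\<close>)
  have re: "(fm has_vector_derivative Re D) (at x)"
    using bounded_linear.has_vector_derivative[OF bounded_linear_Re D] by simp
  have "((\<lambda>y. 0::real) has_vector_derivative Im D) (at x)"
    using bounded_linear.has_vector_derivative[OF bounded_linear_Im D] by simp
  then have "Im D = 0"
    using vector_derivative_unique_at[of "\<lambda>y. 0::real" _ x 0] by (simp add: has_vector_derivative_const)
  then have "D = of_real (Re D)"
    by (simp add: complex_eq_iff)
  moreover have "deriv fm x = Re D"
    using re by (intro DERIV_imp_deriv) (simp add: has_real_derivative_iff_has_vector_derivative)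
  ultimately show ?case
    by (simp add: D_def Fm_def fm_def)
qed

lemma z_over_arsinh_of_real: "z_over_arsinh (of_real x) = of_real (t_over_arsinh x)"
  by (simp add: z_over_arsinh_def t_over_arsinh_def arsinh_complex_of_real)

lemma fps_nth_cauchy2_fps: "cauchy2_fps $ m = of_real (cauchy2 m / fact m)"
proof -
  obtain s where s: "open s" "0 \<in> s" "z_over_arsinh holomorphic_on s"
    using has_fps_expansion_imp_holomorphic[OF z_over_arsinh_has_fps_expansion] by blast
  then obtain e where "e > 0" "ball 0 e \<subseteq> s"
    using openE by blast
  then have "(deriv ^^ m) z_over_arsinh (of_real 0) = of_real ((deriv ^^ m) t_over_arsinh 0)"
    using s by (intro higher_deriv_complex_of_real[of _ e])
               (auto intro: holomorphic_on_subset simp: z_over_arsinh_of_real)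
  then show ?thesis
    by (simp add: fps_nth_fps_expansion[OF z_over_arsinh_has_fps_expansion] cauchy2_def)
qed

lemma cauchy2_odd:
  assumes "odd m"
  shows "cauchy2 m = 0"
proof -
  have "eventually (\<lambda>z. (z_over_arsinh \<circ> uminus) z = z_over_arsinh z) (nhds 0)"
    using eventually_arsinh_regular by eventually_elim (simp add: z_over_arsinh_def arsinh_minus_complex)
  moreover have "(z_over_arsinh \<circ> uminus) has_fps_expansion (cauchy2_fps oo - fps_X)"
    by (intro has_fps_expansion_compose z_over_arsinh_has_fps_expansion
          has_fps_expansion_minus has_fps_expansion_fps_X) simp
  ultimately have "z_over_arsinh has_fps_expansion (cauchy2_fps oo - fps_X)"
    using has_fps_expansion_cong by blast
  then have "cauchy2_fps oo - fps_X = cauchy2_fps"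
    by (rule fps_expansion_unique_complex[OF _ z_over_arsinh_has_fps_expansion])
  then have "(-1) ^ m * cauchy2_fps $ m = cauchy2_fps $ m"
    by (metis fps_compose_uminus' fps_nth_Abs_fps)
  with assms show ?thesis
    by (simp add: fps_nth_cauchy2_fps)
qed

section \<open>The differential equation of t / arsinh t\<close>

definition cauchy2_ode_op :: "(complex \<Rightarrow> complex) \<Rightarrow> complex \<Rightarrow> complex" where
  "cauchy2_ode_op g w = w^3 * deriv (deriv (deriv g)) w - 3 * w^2 * deriv (deriv g) w + 6 * w * deriv g w
     - 6 * g w + w^5 * deriv (deriv (deriv g)) w + w^3 * deriv g w - w^2 * g w"

definition cauchy2_ode_op_fps :: "'a :: comm_ring_1 fps \<Rightarrow> 'a fps" where
  "cauchy2_ode_op_fps F = fps_X^3 * fps_deriv (fps_deriv (fps_deriv F)) - 3 * fps_X^2 * fps_deriv (fps_deriv F)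
     + 6 * fps_X * fps_deriv F - 6 * F + fps_X^5 * fps_deriv (fps_deriv (fps_deriv F))
     + fps_X^3 * fps_deriv F - fps_X^2 * F"

lemma has_fps_expansion_cauchy2_ode_op:
  "g has_fps_expansion F \<Longrightarrow> cauchy2_ode_op g has_fps_expansion cauchy2_ode_op_fps F"
  unfolding cauchy2_ode_op_def [abs_def] cauchy2_ode_op_fps_def by (intro fps_expansion_intros)

lemma fps_nth_cauchy2_ode_op_fps:
  fixes F :: "'a :: comm_ring_1 fps"
  shows "cauchy2_ode_op_fps F $ m = (of_nat m - 1) * (of_nat m - 2) * (of_nat m - 3) * F $ m
     + (if m \<ge> 2 then (of_nat m - 3)^3 * F $ (m - 2) else 0)"
proof -
  have expand: "cauchy2_ode_op_fps F $ m = (if m < 3 then 0 else fps_deriv (fps_deriv (fps_deriv F)) $ (m - 3))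
     - 3 * (if m < 2 then 0 else fps_deriv (fps_deriv F) $ (m - 2))
     + 6 * (if m = 0 then 0 else fps_deriv F $ (m - 1)) - 6 * F $ m
     + (if m < 5 then 0 else fps_deriv (fps_deriv (fps_deriv F)) $ (m - 5))
     + (if m < 3 then 0 else fps_deriv F $ (m - 3))
     - (if m < 2 then 0 else F $ (m - 2))"
    unfolding cauchy2_ode_op_fps_def
    by (simp only: fps_add_nth fps_sub_nth mult.assoc fps_mult_numeral_left
        fps_X_power_mult_nth fps_X_mult_nth)
  consider "m = 0" | "m = 1" | "m = 2" | "m = 3" | "m = 4" | k where "m = Suc (Suc (Suc (Suc (Suc k))))"
    by atomize_elim presburger
  then show ?thesis
    by cases (use expand in \<open>simp_all add: algebra_simps power3_eq_cube eval_nat_numeral\<close>)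
qed

lemma fps_of_real_cauchy2_ode_op_fps:
  "fps_of_real (cauchy2_ode_op_fps F) =
     (cauchy2_ode_op_fps (fps_of_real F) :: 'a :: {comm_ring_1, real_algebra_1} fps)"
  by (simp add: fps_eq_iff fps_nth_cauchy2_ode_op_fps)

text \<open>With \<open>v = 1 / arsinh z\<close> and \<open>r = 1 / sqrt (1 + z^2)\<close> one has \<open>v' = - v^2 r\<close> and
  \<open>r' = - z r^3\<close>, so the derivatives of \<open>z v\<close> are polynomials in \<open>z\<close>, \<open>v\<close>, \<open>r\<close>.\<close>

definition z_over_arsinh_deriv1 :: "complex \<Rightarrow> complex \<Rightarrow> complex \<Rightarrow> complex" where
  "z_over_arsinh_deriv1 z v r = v - z * v^2 * r"

definition z_over_arsinh_deriv2 :: "complex \<Rightarrow> complex \<Rightarrow> complex \<Rightarrow> complex" where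
  "z_over_arsinh_deriv2 z v r = - 2 * v^2 * r + 2 * z * v^3 * r^2 + z^2 * v^2 * r^3"

definition z_over_arsinh_deriv3 :: "complex \<Rightarrow> complex \<Rightarrow> complex \<Rightarrow> complex" where
  "z_over_arsinh_deriv3 z v r = 6 * v^3 * r^2 + 4 * z * v^2 * r^3 - 6 * z * v^4 * r^3
     - 6 * z^2 * v^3 * r^4 - 3 * z^3 * v^2 * r^5"

lemma has_field_derivative_z_over_arsinh_derivs:
  assumes "arsinh_regular z" "arsinh z \<noteq> 0"
  defines "v \<equiv> \<lambda>z. inverse (arsinh z)" and "r \<equiv> \<lambda>z. inverse (arsinh_sqrt z)"
  shows "((\<lambda>z. z * v z) has_field_derivative z_over_arsinh_deriv1 z (v z) (r z)) (at z)"
    and "((\<lambda>z. z_over_arsinh_deriv1 z (v z) (r z))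
           has_field_derivative z_over_arsinh_deriv2 z (v z) (r z)) (at z)"
    and "((\<lambda>z. z_over_arsinh_deriv2 z (v z) (r z))
           has_field_derivative z_over_arsinh_deriv3 z (v z) (r z)) (at z)"
proof -
  from assms(1) have "z^2 + 1 \<notin> \<real>\<^sub>\<le>\<^sub>0"
    by (simp add: arsinh_regular_def)
  then have "arsinh_sqrt z \<noteq> 0"
    by (intro arsinh_sqrt_nonzero) auto
  have Dv: "(v has_field_derivative - (v z ^ 2 * r z)) (at z)"
    using DERIV_inverse_fun[OF has_field_derivative_arsinh_complex[OF assms(1)] assms(2)]
    by (simp add: v_def r_def field_simps power2_eq_square)
  have Dr: "(r has_field_derivative - (z * r z ^ 3)) (at z)"
    using DERIV_inverse_fun[OF has_field_derivative_arsinh_sqrt[OF \<open>z^2 + 1 \<notin> \<real>\<^sub>\<le>\<^sub>0\<close>]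
        \<open>arsinh_sqrt z \<noteq> 0\<close>]
    by (simp add: r_def field_simps power3_eq_cube)
  show "((\<lambda>z. z * v z) has_field_derivative z_over_arsinh_deriv1 z (v z) (r z)) (at z)"
    by (rule derivative_eq_intros Dv refl)+
       (simp add: z_over_arsinh_deriv1_def algebra_simps power2_eq_square)
  show "((\<lambda>z. z_over_arsinh_deriv1 z (v z) (r z))
           has_field_derivative z_over_arsinh_deriv2 z (v z) (r z)) (at z)"
    unfolding z_over_arsinh_deriv1_def
    by (rule derivative_eq_intros Dv Dr refl)+
       (simp add: z_over_arsinh_deriv2_def algebra_simps power2_eq_square power3_eq_cube)
  show "((\<lambda>z. z_over_arsinh_deriv2 z (v z) (r z))
           has_field_derivative z_over_arsinh_deriv3 z (v z) (r z)) (at z)"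
    unfolding z_over_arsinh_deriv2_def
    by (rule derivative_eq_intros Dv Dr refl)+ (simp add: z_over_arsinh_deriv3_def, algebra)
qed

lemma z_over_arsinh_ode_polynomial:
  fixes z v r s :: complex
  assumes "r * s = 1" "s^2 = z^2 + 1"
  shows "6 * (z * v)^4 + s * (z^3 * z_over_arsinh_deriv3 z v r - 3 * z^2 * z_over_arsinh_deriv2 z v r
      + 6 * z * z_over_arsinh_deriv1 z v r - 6 * (z * v) + z^5 * z_over_arsinh_deriv3 z v r
      + z^3 * z_over_arsinh_deriv1 z v r - z^2 * (z * v)) = 0"
  using assms
  unfolding z_over_arsinh_deriv1_def z_over_arsinh_deriv2_def z_over_arsinh_deriv3_def
  by algebra

lemma deriv_eq_on_open:
  assumes "open B" "z \<in> B" "\<And>w. w \<in> B \<Longrightarrow> g w = f w"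
    and "\<And>w. w \<in> B \<Longrightarrow> (f has_field_derivative f' w) (at w)"
  shows "deriv g z = f' z"
  by (rule DERIV_imp_deriv, rule has_field_derivative_transform_within_open[OF assms(4) assms(1)])
     (use assms in auto)

lemma z_over_arsinh_ode_on_open:
  assumes "open B" "z \<in> B"
    and B: "\<And>z. z \<in> B \<Longrightarrow> arsinh_regular z \<and> arsinh z \<noteq> 0 \<and> z \<noteq> 0"
  shows "6 * z_over_arsinh z ^ 4 + arsinh_sqrt z * cauchy2_ode_op z_over_arsinh z = 0"
proof -
  define v where "v z = inverse (arsinh z)" for z :: complex
  define r where "r z = inverse (arsinh_sqrt z)" for z :: complex
  note derivs = has_field_derivative_z_over_arsinh_derivs[folded v_def r_def]
  have zv: "z_over_arsinh w = w * v w" if "w \<in> B" for w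
    using B[OF that] by (simp add: z_over_arsinh_def v_def field_simps)
  have d1: "deriv z_over_arsinh w = z_over_arsinh_deriv1 w (v w) (r w)" if "w \<in> B" for w
    by (rule deriv_eq_on_open[where f="\<lambda>z. z * v z", OF \<open>open B\<close> that])
       (auto intro: derivs simp: zv B)
  have d2: "deriv (deriv z_over_arsinh) w = z_over_arsinh_deriv2 w (v w) (r w)" if "w \<in> B" for w
    by (rule deriv_eq_on_open[where f="\<lambda>z. z_over_arsinh_deriv1 z (v z) (r z)", OF \<open>open B\<close> that])
       (auto intro: derivs simp: d1 B)
  have d3: "deriv (deriv (deriv z_over_arsinh)) w = z_over_arsinh_deriv3 w (v w) (r w)"
    if "w \<in> B" for w
    by (rule deriv_eq_on_open[where f="\<lambda>z. z_over_arsinh_deriv2 z (v z) (r z)", OF \<open>open B\<close> that])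
       (auto intro: derivs simp: d2 B)
  have "z^2 + 1 \<noteq> 0"
    using B[OF \<open>z \<in> B\<close>] by (auto simp: arsinh_regular_def)
  then have "arsinh_sqrt z ^ 2 = z^2 + 1" "r z * arsinh_sqrt z = 1"
    using arsinh_sqrt_power2 arsinh_sqrt_nonzero by (simp_all add: r_def)
  then show ?thesis
    using \<open>z \<in> B\<close> by (simp add: cauchy2_ode_op_def zv d1 d2 d3 z_over_arsinh_ode_polynomial)
qed

lemma eventually_z_over_arsinh_ode:
  "eventually (\<lambda>z. 6 * z_over_arsinh z ^ 4 + arsinh_sqrt z * cauchy2_ode_op z_over_arsinh z = 0) (at 0)"
proof -
  have "isCont arsinh_quot 0"
    using analytic_at_imp_isCont[OF arsinh_quot_analytic_at_0] by simp
  then have "eventually (\<lambda>z. arsinh_quot z \<in> - {0}) (nhds 0)"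
    by (rule isCont_eventually_in_open) (auto simp: arsinh_quot_def)
  with eventually_arsinh_regular
  have "eventually (\<lambda>z. arsinh_regular z \<and> arsinh_quot z \<noteq> 0) (nhds 0)"
    by eventually_elim auto
  then obtain e where "e > 0"
    and e: "\<And>z. dist z 0 < e \<Longrightarrow> arsinh_regular z \<and> arsinh_quot z \<noteq> 0"
    unfolding eventually_nhds_metric by blast
  define B where "B = ball 0 e - {0 :: complex}"
  have "open B"
    by (simp add: B_def open_Diff)
  have B: "arsinh_regular z \<and> arsinh z \<noteq> 0 \<and> z \<noteq> 0" if "z \<in> B" for z
    using e[of z] that by (auto simp: B_def dist_commute arsinh_quot_def)
  have "6 * z_over_arsinh z ^ 4 + arsinh_sqrt z * cauchy2_ode_op z_over_arsinh z = 0"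
    if "z \<in> B" for z
    using \<open>open B\<close> that B by (rule z_over_arsinh_ode_on_open)
  moreover have "eventually (\<lambda>z. z \<in> B) (at 0)"
    unfolding B_def eventually_at_filter
    by (intro eventually_mono[OF eventually_nhds_in_open[of "ball 0 e"]]) (use \<open>e > 0\<close> in auto)
  ultimately show ?thesis
    by (auto elim: eventually_mono)
qed

lemma has_fps_expansion_eventually_zero:
  fixes f :: "complex \<Rightarrow> complex"
  assumes "f has_fps_expansion F" "eventually (\<lambda>z. f z = 0) (at 0)"
  shows "F = 0"
proof -
  have "isCont f 0"
    using has_fps_expansion_imp_continuous[OF assms(1)] by simp
  then have "(f \<longlongrightarrow> f 0) (at 0)"
    by (simp add: isCont_def)
  moreover have "(f \<longlongrightarrow> 0) (at 0)"
    using assms(2) by (rule tendsto_eventually)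
  ultimately have "f 0 = 0"
    by (rule tendsto_unique[rotated]) simp
  with assms(2) have "f has_fps_expansion 0"
    by (simp add: has_fps_expansion_0_iff eventually_nhds_conv_at)
  with assms(1) show ?thesis
    by (rule fps_expansion_unique_complex)
qed

lemma arsinh_sqrt_has_fps_expansion:
  "arsinh_sqrt has_fps_expansion (fps_binomial (of_real (1/2)) oo fps_X^2)"
proof -
  have "((\<lambda>u. (1 + u) powr of_real (1/2)) \<circ> (\<lambda>z::complex. z^2))
          has_fps_expansion (fps_binomial (of_real (1/2)) oo fps_X^2)"
    by (intro has_fps_expansion_compose has_fps_expansion_binomial_complex
          has_fps_expansion_fps_X_power) simp
  moreover have "(\<lambda>u. (1 + u) powr of_real (1/2)) \<circ> (\<lambda>z::complex. z^2) = arsinh_sqrt"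
    by (simp add: arsinh_sqrt_def fun_eq_iff add.commute)
  ultimately show ?thesis
    by simp
qed

lemma cauchy2_fps_ode:
  "6 * cauchy2_fps ^ 4 + (fps_binomial (of_real (1/2)) oo fps_X^2) * cauchy2_ode_op_fps cauchy2_fps = 0"
  by (rule has_fps_expansion_eventually_zero[OF _ eventually_z_over_arsinh_ode])
     (intro fps_expansion_intros has_fps_expansion_cauchy2_ode_op arsinh_sqrt_has_fps_expansion
        z_over_arsinh_has_fps_expansion)

section \<open>The coefficient identity\<close>

definition cauchy2_series :: "real fps" where
  "cauchy2_series = Abs_fps (\<lambda>m. cauchy2 m / fact m)"

definition cauchy2_even_series :: "real fps" where
  "cauchy2_even_series = Abs_fps (\<lambda>i. cauchy2 (2 * i) / fact (2 * i))"

lemma cauchy2_series_ode: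
  "6 * cauchy2_series ^ 4 + (fps_binomial (1/2) oo fps_X^2) * cauchy2_ode_op_fps cauchy2_series = 0"
proof -
  have "fps_of_real cauchy2_series = cauchy2_fps"
    by (simp add: fps_eq_iff fps_nth_cauchy2_fps cauchy2_series_def)
  then have "fps_of_real (6 * cauchy2_series ^ 4
      + (fps_binomial (1/2) oo fps_X^2) * cauchy2_ode_op_fps cauchy2_series) = (fps_of_real 0 :: complex fps)"
    using cauchy2_fps_ode by (simp add: fps_of_real_binomial_compose_X_power2 fps_of_real_cauchy2_ode_op_fps)
  then show ?thesis
    by (simp only: fps_of_real_eq_iff)
qed

lemma cauchy2_even_series_ode:
  "6 * cauchy2_even_series ^ 4
     + Abs_fps (\<lambda>i. cauchy2_ode_op_fps cauchy2_series $ (2 * i)) * fps_binomial (1/2) = 0"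
  (is "6 * ?E ^ 4 + ?H * ?B = 0")
proof -
  have odd: "cauchy2_series $ m = 0" if "odd m" for m
    using that by (simp add: cauchy2_series_def cauchy2_odd)
  have "Abs_fps (\<lambda>i. cauchy2_series $ (2 * i)) = ?E"
    by (simp add: cauchy2_series_def cauchy2_even_series_def)
  then have G: "cauchy2_series = ?E oo fps_X^2"
    using fps_eq_even_part_compose_X_power2[OF odd] by simp
  have L: "cauchy2_ode_op_fps cauchy2_series = ?H oo fps_X^2"
    by (rule fps_eq_even_part_compose_X_power2) (auto simp: fps_nth_cauchy2_ode_op_fps odd)
  have X0: "(fps_X^2 :: real fps) $ 0 = 0"
    by simp
  have "(6 * ?E ^ 4 + ?H * ?B) oo fps_X^2 = 6 * (?E oo fps_X^2) ^ 4 + (?B oo fps_X^2) * (?H oo fps_X^2)"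
    by (simp add: fps_compose_add_distrib fps_compose_mult_distrib[OF X0] fps_compose_power[OF X0])
  also have "\<dots> = 6 * cauchy2_series ^ 4 + (?B oo fps_X^2) * cauchy2_ode_op_fps cauchy2_series"
    by (simp only: G [symmetric] L [symmetric])
  finally show ?thesis
    using cauchy2_series_ode by (simp add: fps_compose_X_power2_eq_0_iff)
qed

lemma cauchy_conv_replicate_0:
  "cauchy_conv (replicate k 0) n = fact (2 * n) * (cauchy2_even_series ^ k) $ n"
proof -
  have "cauchy_conv (replicate k 0) n = (\<Sum>is\<in>weak_compositions k n.
      fact (2 * n) / (\<Prod>j<k. fact (2 * is ! j)) * (\<Prod>j<k. cauchy2 (2 * is ! j)))"
    unfolding cauchy_conv_def weak_compositions_def by (intro sum.cong) simp_all
  also have "\<dots> = fact (2 * n) *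
      (\<Sum>is\<in>weak_compositions k n. \<Prod>j<k. cauchy2_even_series $ (is ! j))"
    by (simp add: sum_distrib_left cauchy2_even_series_def prod_dividef)
  finally show ?thesis
    by (simp add: fps_nth_power_weak_compositions)
qed

lemma dfact_odd_Suc: "dfact (2 * int k - 1) = dfact (2 * int k - 3) * (2 * real k - 1)"
proof (cases k)
  case (Suc j)
  have "nat ((2 * int k - 1 + 1) div 2) = Suc j" "nat ((2 * int k - 3 + 1) div 2) = j"
    using Suc by simp_all
  moreover have "2 * int k - 1 \<ge> -1" "2 * int k - 3 \<ge> -1"
    using Suc by simp_all
  ultimately have "dfact (2 * int k - 1) = (\<Prod>i=1..Suc j. real (2 * i - 1))"
    and "dfact (2 * int k - 3) = (\<Prod>i=1..j. real (2 * i - 1))"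
    by (simp_all only: dfact_def if_True)
  with Suc show ?thesis
    by (simp add: prod.nat_ivl_Suc' of_nat_diff)
qed (simp add: dfact_def)

lemma gbinomial_half_dfact:
  "(1/2 :: real) gchoose k = - ((-1)^k * dfact (2 * int k - 3) / (2^k * fact k))"
proof -
  have "(\<Prod>i<k. 1/2 - real i) = - ((-1)^k * dfact (2 * int k - 3) / 2^k)"
  proof (induction k)
    case 0
    then show ?case by (simp add: dfact_def)
  next
    case (Suc k)
    have "dfact (2 * int (Suc k) - 3) = dfact (2 * int k - 3) * (2 * real k - 1)"
      using dfact_odd_Suc[of k] by (simp add: algebra_simps)
    moreover have "(\<Prod>i<Suc k. 1/2 - real i) = (\<Prod>i<k. 1/2 - real i) * (1/2 - real k)"
      by simp
    ultimately show ?case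
      by (simp only: Suc.IH) (simp add: field_simps)
  qed
  moreover have "fact k * ((1/2 :: real) gchoose k) = (\<Prod>i<k. 1/2 - real i)"
    by (simp add: gbinomial_mult_fact atLeast0LessThan)
  ultimately have "fact k * ((1/2 :: real) gchoose k) = - ((-1)^k * dfact (2 * int k - 3) / 2^k)"
    by simp
  then show ?thesis
    by (simp add: field_simps)
qed

lemma cauchy2_ode_op_even_binomial_half_nth:
  "- (Abs_fps (\<lambda>i. cauchy2_ode_op_fps cauchy2_series $ (2 * i)) * fps_binomial (1/2)) $ n =
    (\<Sum>l=0..n. (-1)^(n-l) * dfact (2*int n - 2*int l - 3)
        * ((2*real l - 1) * (2*real l - 2) * (2*real l - 3))
        / (2^(n-l) * fact (n-l) * fact (2*l)) * cauchy2 (2*l))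
  + (\<Sum>l=1..n. (-1)^(n-l) * dfact (2*int n - 2*int l - 3)
        * ((2*real l) * (2*real l - 1) * (2*real l - 3)^3)
        / (2^(n-l) * fact (n-l) * fact (2*l)) * cauchy2 (2*l - 2))"
  (is "_ = sum ?T1 _ + sum ?T2 _")
proof -
  have summand: "- (cauchy2_ode_op_fps cauchy2_series $ (2 * l) * ((1/2) gchoose (n - l)))
      = ?T1 l + (if 1 \<le> l then ?T2 l else 0)" if "l \<le> n" for l
  proof -
    define w where "w = (-1)^(n-l) * dfact (2*int n - 2*int l - 3) / (2^(n-l) * fact (n-l))"
    have "2 * int (n - l) - 3 = 2 * int n - 2 * int l - 3"
      using that by (simp add: of_nat_diff)
    then have binom: "(1/2) gchoose (n - l) = - w"
      by (simp add: gbinomial_half_dfact w_def)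
    have coeff: "cauchy2_ode_op_fps cauchy2_series $ (2 * l)
        = (2*real l - 1) * (2*real l - 2) * (2*real l - 3) * (cauchy2 (2*l) / fact (2*l))
          + (if 1 \<le> l then (2*real l - 3)^3 * (cauchy2 (2*l - 2) / fact (2*l - 2)) else 0)"
      by (simp add: fps_nth_cauchy2_ode_op_fps cauchy2_series_def)
    have T1: "?T1 l
        = w * ((2*real l - 1) * (2*real l - 2) * (2*real l - 3)) * (cauchy2 (2*l) / fact (2*l))"
      by (simp add: w_def)
    have T2: "?T2 l = w * (2*real l - 3)^3 * (cauchy2 (2*l - 2) / fact (2*l - 2))" if "1 \<le> l"
    proof -
      obtain j where "l = Suc j"
        using \<open>1 \<le> l\<close> not0_implies_Suc by fastforce
      then have "fact (2 * l) = (2 * real l) * (2 * real l - 1) * fact (2 * l - 2)"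
        by (simp add: algebra_simps)
      moreover have "2 * real l \<noteq> 0" "2 * real l - 1 \<noteq> 0"
        using \<open>1 \<le> l\<close> by auto
      ultimately show ?thesis
        by (simp add: w_def)
    qed
    show ?thesis
      unfolding coeff binom using T1 T2 by (simp add: algebra_simps)
  qed
  have split: "{0..n} \<inter> {l. Suc 0 \<le> l} = {Suc 0..n}"
    by auto
  have "- (Abs_fps (\<lambda>i. cauchy2_ode_op_fps cauchy2_series $ (2 * i)) * fps_binomial (1/2)) $ n
      = (\<Sum>l=0..n. ?T1 l + (if 1 \<le> l then ?T2 l else 0))"
    by (simp add: fps_mult_nth summand flip: sum_negf)
  also have "\<dots> = sum ?T1 {0..n} + sum ?T2 {1..n}"
    by (simp add: sum.distrib sum.If_cases split)
  finally show ?thesis .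
qed

text \<open>The identity holds for \<open>n = 0\<close> as well.\<close>

theorem theorem6:
  fixes n :: nat
  assumes "n \<ge> 1"
  shows "cauchy_conv [0,0,0,0] n =
    fact (2*n) / 6 * (\<Sum>l=0..n. (-1)^(n-l) * dfact (2*int n - 2*int l - 3)
        * ((2*real l - 1) * (2*real l - 2) * (2*real l - 3))
        / (2^(n-l) * fact (n-l) * fact (2*l)) * cauchy2 (2*l))
  + fact (2*n) / 6 * (\<Sum>l=1..n. (-1)^(n-l) * dfact (2*int n - 2*int l - 3)
        * ((2*real l) * (2*real l - 1) * (2*real l - 3)^3)
        / (2^(n-l) * fact (n-l) * fact (2*l)) * cauchy2 (2*l - 2))"
proof -
  have "cauchy_conv [0,0,0,0] n = fact (2*n) / 6 * (6 * (cauchy2_even_series ^ 4) $ n)"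
    using cauchy_conv_replicate_0[of 4 n] by (simp add: numeral_eq_Suc)
  also have "6 * (cauchy2_even_series ^ 4) $ n
      = - (Abs_fps (\<lambda>i. cauchy2_ode_op_fps cauchy2_series $ (2 * i)) * fps_binomial (1/2)) $ n"
    using arg_cong[where f="\<lambda>F. F $ n", OF cauchy2_even_series_ode] by (simp add: eq_neg_iff_add_eq_0)
  also note cauchy2_ode_op_even_binomial_half_nth
  finally show ?thesis
    by (simp add: distrib_left)
qed

end
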